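(* Let $k\ge 3$ be an integer and $F$ a field admitting a primitive $(k-1)$-th root of unity with $\mathrm{char}(F)\nmid k$. Let $X$ be a finite poset, $B$ a unital associative $F$-algebra, and $\varphi:I(X,F)\to B$ an $F$-linear map with $\varphi(P_k(I(X,F)))\subseteq P_k(B)$ and $1\in\varphi(I(X,F))$. Then there exist a Jordan homomorphism $\psi:I(X,F)\to B$ and an element $u\in B$ commuting with every element of $\varphi(I(X,F))$, with $u^{k-1}=1$, such that $\varphi=u\psi$.
   Context: $I(X,F)$ is the incidence algebra of the locally finite poset $X$ over $F$ (functions $f:X\times X\to F$ vanishing unless $x\le y$, with product $(fg)(x,y)=\sum_{x\le z\le y}f(x,z)g(z,y)$). $P_k(A)=\{a: a^k=a\}$. A Jordan homomorphism $\psi:A\to B$ of associative algebras is a linear map with $\psi(a^2)=\psi(a)^2$ and $\psi(aba)=\psi(a)\psi(b)\psi(a)$ for all $a,b$. *)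

theory Defs
  imports Main
begin

definition incidence :: "('x::order \<Rightarrow> 'x \<Rightarrow> 'f::field) set" where
  "incidence = {f. \<forall>x y. \<not> x \<le> y \<longrightarrow> f x y = 0}"

definition inc_add :: "('x \<Rightarrow> 'x \<Rightarrow> 'f::field) \<Rightarrow> ('x \<Rightarrow> 'x \<Rightarrow> 'f) \<Rightarrow> 'x \<Rightarrow> 'x \<Rightarrow> 'f" where
  "inc_add f g = (\<lambda>x y. f x y + g x y)"

definition inc_smult :: "'f::field \<Rightarrow> ('x \<Rightarrow> 'x \<Rightarrow> 'f) \<Rightarrow> 'x \<Rightarrow> 'x \<Rightarrow> 'f" where
  "inc_smult c f = (\<lambda>x y. c * f x y)"

definition inc_mult :: "('x::order \<Rightarrow> 'x \<Rightarrow> 'f::field) \<Rightarrow> ('x \<Rightarrow> 'x \<Rightarrow> 'f) \<Rightarrow> 'x \<Rightarrow> 'x \<Rightarrow> 'f" where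
  "inc_mult f g = (\<lambda>x y. \<Sum>z\<in>{z. x \<le> z \<and> z \<le> y}. f x z * g z y)"

definition inc_one :: "'x::order \<Rightarrow> 'x \<Rightarrow> 'f::field" where
  "inc_one = (\<lambda>x y. if x = y then 1 else 0)"

primrec inc_pow :: "('x::order \<Rightarrow> 'x \<Rightarrow> 'f::field) \<Rightarrow> nat \<Rightarrow> 'x \<Rightarrow> 'x \<Rightarrow> 'f" where
  "inc_pow f 0 = inc_one"
| "inc_pow f (Suc n) = inc_mult f (inc_pow f n)"

definition inc_Pk :: "nat \<Rightarrow> ('x::order \<Rightarrow> 'x \<Rightarrow> 'f::field) set" where
  "inc_Pk k = {a \<in> incidence. inc_pow a k = a}"

definition Pk :: "nat \<Rightarrow> 'b::ring_1 set" where
  "Pk k = {b. b ^ k = b}"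

definition is_F_algebra :: "('f::field \<Rightarrow> 'b::ring_1 \<Rightarrow> 'b) \<Rightarrow> bool" where
  "is_F_algebra smul \<longleftrightarrow>
     (\<forall>c x y. smul c (x + y) = smul c x + smul c y) \<and>
     (\<forall>c d x. smul (c + d) x = smul c x + smul d x) \<and>
     (\<forall>c d x. smul (c * d) x = smul c (smul d x)) \<and>
     (\<forall>x. smul 1 x = x) \<and>
     (\<forall>c x y. smul c (x * y) = smul c x * y) \<and>
     (\<forall>c x y. smul c (x * y) = x * smul c y)"

text \<open>F-linear maps I(X,F) \<rightarrow> B (only their values on I(X,F) matter)\<close>
definition inc_linear :: "('f::field \<Rightarrow> 'b::ring_1 \<Rightarrow> 'b) \<Rightarrow> (('x::order \<Rightarrow> 'x \<Rightarrow> 'f) \<Rightarrow> 'b) \<Rightarrow> bool" where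
  "inc_linear smul \<phi> \<longleftrightarrow>
     (\<forall>f\<in>incidence. \<forall>g\<in>incidence. \<phi> (inc_add f g) = \<phi> f + \<phi> g) \<and>
     (\<forall>c. \<forall>f\<in>incidence. \<phi> (inc_smult c f) = smul c (\<phi> f))"

definition inc_jordan_hom :: "('f::field \<Rightarrow> 'b::ring_1 \<Rightarrow> 'b) \<Rightarrow> (('x::order \<Rightarrow> 'x \<Rightarrow> 'f) \<Rightarrow> 'b) \<Rightarrow> bool" where
  "inc_jordan_hom smul \<psi> \<longleftrightarrow> inc_linear smul \<psi> \<and>
     (\<forall>a\<in>incidence. \<psi> (inc_mult a a) = \<psi> a * \<psi> a) \<and>
     (\<forall>a\<in>incidence. \<forall>b\<in>incidence. \<psi> (inc_mult (inc_mult a b) a) = \<psi> a * \<psi> b * \<psi> a)"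

end

(*
  Write n = k - 1 and u = phi 1. For an idempotent e with complement f = 1 - e, every
  e + w^j f (w a primitive n-th root of unity) lies in P_k; filtering the expansions of
  (phi e + w^j phi f)^k against the powers of w isolates the part of degree one in phi f,
  which must vanish, and this forces phi e phi f = phi f phi e = 0. Hence
  u phi e = (phi e)^2 = phi e u and u^n phi e = phi e for all idempotents e. Idempotents
  span I(X,F), so u commutes with phi(I(X,F)), u^n = 1 (as 1 lies in the image), and
  psi = u^(n-1) phi maps idempotents to idempotents. Finally, a linear map on I(X,F)
  preserving idempotents is a Jordan homomorphism: its defect on squares vanishes on
  idempotents, and polarising this over suitable idempotent sums of matrix units shows that
  its defect on Jordan products vanishes on all pairs of matrix units.
*)

theory Submission
  imports Defs "HOL-Library.Function_Algebras" "HOL-Computational_Algebra.Primes"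
begin

section \<open>Roots of unity\<close>

definition primitive_root :: "'a::monoid_mult \<Rightarrow> nat \<Rightarrow> bool" where
  "primitive_root \<omega> n \<longleftrightarrow> \<omega> ^ n = 1 \<and> (\<forall>j. 0 < j \<and> j < n \<longrightarrow> \<omega> ^ j \<noteq> 1)"

lemma primitive_root_power_mod:
  assumes "primitive_root \<omega> n"
  shows "\<omega> ^ m = \<omega> ^ (m mod n)"
proof -
  have "\<omega> ^ m = \<omega> ^ (n * (m div n) + m mod n)"
    by simp
  also have "\<dots> = (\<omega> ^ n) ^ (m div n) * \<omega> ^ (m mod n)"
    by (simp only: power_add power_mult)
  finally show ?thesis
    using assms by (simp add: primitive_root_def)
qed

text \<open>If the characteristic p divided n = p r, Frobenius would give
  (\<omega>^r - 1)^p = \<omega>^n - 1 = 0 with 0 < r < n.\<close>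
lemma of_nat_neq_0_if_primitive_root:
  fixes \<omega> :: "'f::field"
  assumes "primitive_root \<omega> n" and "n \<ge> 2"
  shows "of_nat n \<noteq> (0::'f)"
proof
  assume "of_nat n = (0::'f)"
  then obtain r where r: "n = CHAR('f) * r" by (auto simp: of_nat_eq_0_iff_char_dvd)
  with \<open>n \<ge> 2\<close> have "CHAR('f) > 0" by (auto intro: Nat.gr0I)
  then have p: "prime CHAR('f)" by (rule prime_CHAR_semidom)
  then have "r > 0" "r < n"
    using r \<open>n \<ge> 2\<close> prime_gt_1_nat[OF p] by (auto intro: Nat.gr0I)
  have "(\<omega> ^ r - 1) ^ CHAR('f) = (\<omega> ^ r) ^ CHAR('f) + (- 1) ^ CHAR('f)"
    using freshmans_dream[OF p refl, of "\<omega> ^ r" "- 1"] by simp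
  also have "\<dots> = 0"
    using assms(1) r minus_power_prime_CHAR[OF refl p, of 1]
    by (simp add: primitive_root_def power_mult[symmetric] mult.commute)
  finally have "\<omega> ^ r = 1" by simp
  with assms(1) \<open>r > 0\<close> \<open>r < n\<close> show False by (simp add: primitive_root_def)
qed

lemma sum_powers_primitive_root:
  fixes \<omega> :: "'f::field"
  assumes \<omega>: "primitive_root \<omega> n" and "n \<ge> 1"
  shows "(\<Sum>j<n. \<omega> ^ (j * m)) = (if n dvd m then of_nat n else 0)"
proof -
  have powers: "\<omega> ^ (j * m) = (\<omega> ^ m) ^ j" for j
    by (simp add: power_mult[symmetric] mult.commute)
  show ?thesis
  proof (cases "n dvd m")
    case True
    then have "\<omega> ^ m = 1" by (metis primitive_root_power_mod[OF \<omega>] dvd_imp_mod_0 power_0)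
    with True show ?thesis by (simp add: powers)
  next
    case False
    then have "m mod n \<noteq> 0" and "m mod n < n"
      using \<open>n \<ge> 1\<close> by (simp_all add: dvd_eq_mod_eq_0)
    then have "\<omega> ^ (m mod n) \<noteq> 1"
      using \<omega> by (simp add: primitive_root_def)
    then have "\<omega> ^ m \<noteq> 1"
      by (metis primitive_root_power_mod[OF \<omega>])
    moreover have "(\<omega> ^ m) ^ n = (\<omega> ^ n) ^ m"
      by (simp add: power_mult[symmetric] mult.commute)
    then have "(\<omega> ^ m) ^ n = 1"
      using \<omega> by (simp add: primitive_root_def)
    ultimately show ?thesis using False by (simp add: powers sum_gp_strict)
  qed
qed

lemma two_neq_0_if_of_nat_Suc:
  assumes "of_nat n \<noteq> (0::'a::semiring_1)" and "of_nat (Suc n) \<noteq> (0::'a)"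
  shows "(2::'a) \<noteq> 0"
proof
  assume "(2::'a) = 0"
  then have "of_nat m = (0::'a)" if "even m" for m
    using that by (metis dvd_def mult_zero_left of_nat_mult of_nat_numeral)
  moreover have "even n \<or> even (Suc n)" by simp
  ultimately show False using assms by blast
qed

lemma dvd_add_pred_cases:
  fixes n i :: nat
  assumes "n \<ge> 2" and "i \<le> Suc n" and "n dvd i + (n - 1)"
  shows "i = 1 \<or> i = Suc n"
proof -
  obtain q where q: "i + (n - 1) = n * q" using assms(3) by blast
  have "n * q \<noteq> 0" using q assms(1) by linarith
  then have "q \<noteq> 0" by simp
  moreover have "\<not> q \<ge> 3"
  proof
    assume "q \<ge> 3"
    then have "n * 3 \<le> n * q" by simp
    with q assms(1,2) show False by linarith
  qed
  ultimately have "q = 1 \<or> q = 2" by auto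
  with q assms(1) show ?thesis by auto
qed

section \<open>Noncommutative binomial expansion\<close>

text \<open>mixed_power a b i m is the sum of the words of length m in a and b containing
  exactly i letters b, i.e. the part of (a + b)^m of degree i in b.\<close>
fun mixed_power :: "'b::ring_1 \<Rightarrow> 'b \<Rightarrow> nat \<Rightarrow> nat \<Rightarrow> 'b" where
  "mixed_power a b i 0 = (if i = 0 then 1 else 0)"
| "mixed_power a b i (Suc m) =
     a * mixed_power a b i m + (if i = 0 then 0 else b * mixed_power a b (i - 1) m)"

lemma mixed_power_eq_0: "m < i \<Longrightarrow> mixed_power a b i m = 0"
  by (induction m arbitrary: i) auto

lemma mixed_power_0: "mixed_power a b 0 m = a ^ m"
  by (induction m) auto

lemma mixed_power_diag: "mixed_power a b m m = b ^ m"
  by (induction m) (auto simp: mixed_power_eq_0)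

lemma mixed_power_1_commutator:
  "a * mixed_power a b 1 m - mixed_power a b 1 m * a = a ^ m * b - b * a ^ m"
proof (induction m)
  case (Suc m)
  have "a * mixed_power a b 1 (Suc m) - mixed_power a b 1 (Suc m) * a
      = a * (a * mixed_power a b 1 m - mixed_power a b 1 m * a) + a * b * a ^ m - b * a ^ m * a"
    by (simp add: mixed_power_0 algebra_simps)
  also have "\<dots> = a * (a ^ m * b - b * a ^ m) + a * b * a ^ m - b * a ^ m * a"
    by (simp only: Suc.IH)
  also have "\<dots> = a ^ Suc m * b - b * a ^ Suc m"
    by (simp add: algebra_simps power_commutes)
  finally show ?case .
qed simp

lemma mixed_power_1_commuting:
  assumes "a * b = b * a"
  shows "mixed_power a b 1 (Suc m) = of_nat (Suc m) * (b * a ^ m)"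
proof (induction m)
  case (Suc m)
  have "a * (b * a ^ m) = b * a ^ Suc m"
    using assms by (metis mult.assoc power_Suc)
  then have "a * (of_nat (Suc m) * (b * a ^ m)) = of_nat (Suc m) * (b * a ^ Suc m)"
    by (metis mult.assoc mult_of_nat_commute)
  moreover have "mixed_power a b 1 (Suc (Suc m)) = a * (of_nat (Suc m) * (b * a ^ m)) + b * a ^ Suc m"
    using Suc.IH by (simp add: mixed_power_0)
  ultimately show ?case by (simp add: algebra_simps)
qed (simp add: mixed_power_0)

locale F_algebra =
  fixes smul :: "'f::field \<Rightarrow> 'b::ring_1 \<Rightarrow> 'b"
  assumes F_algebra: "is_F_algebra smul"
begin

lemma smul_add_right: "smul c (x + y) = smul c x + smul c y"
  using F_algebra by (simp add: is_F_algebra_def)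

lemma smul_add_left: "smul (c + d) x = smul c x + smul d x"
  using F_algebra by (simp add: is_F_algebra_def)

lemma smul_smul: "smul c (smul d x) = smul (c * d) x"
  using F_algebra by (simp add: is_F_algebra_def)

lemma smul_one: "smul 1 x = x"
  using F_algebra by (simp add: is_F_algebra_def)

lemma smul_mult_left: "smul c (x * y) = smul c x * y"
  using F_algebra unfolding is_F_algebra_def by blast

lemma smul_mult_right: "smul c (x * y) = x * smul c y"
  using F_algebra unfolding is_F_algebra_def by blast

lemma smul_zero_left: "smul 0 x = 0"
  using smul_add_left[of 0 0 x] by simp

lemma smul_zero_right: "smul c 0 = 0"
  using smul_add_right[of c 0 0] by simp

lemma smul_minus_left: "smul (- c) x = - smul c x"
  using minus_unique[of "smul c x" "smul (- c) x"] smul_add_left[of c "- c" x]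
  by (simp add: smul_zero_left)

lemma smul_sum_right: "smul c (\<Sum>i\<in>A. x i) = (\<Sum>i\<in>A. smul c (x i))"
  by (induction A rule: infinite_finite_induct) (auto simp: smul_zero_right smul_add_right)

lemma smul_sum_left: "smul (\<Sum>i\<in>A. c i) x = (\<Sum>i\<in>A. smul (c i) x)"
  by (induction A rule: infinite_finite_induct) (auto simp: smul_zero_left smul_add_left)

lemma of_nat_mult_eq_smul: "of_nat m * x = smul (of_nat m) x"
  by (induction m) (auto simp: smul_zero_left smul_add_left smul_one distrib_right)

lemma smul_eq_0_imp: "c \<noteq> 0 \<Longrightarrow> smul c x = 0 \<Longrightarrow> x = 0"
  using smul_smul[of "inverse c" c x] by (simp add: smul_one smul_zero_right)

lemma double_cancel: "(2::'f) \<noteq> 0 \<Longrightarrow> x + x = y + y \<Longrightarrow> x = (y::'b)"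
  using smul_eq_0_imp[of 2 "x - y"] smul_add_left[of 1 1 "x - y"]
  by (simp add: smul_one algebra_simps)

lemma power_add_smul_expand:
  "(a + smul t b) ^ m = (\<Sum>i\<le>m. smul (t ^ i) (mixed_power a b i m))"
proof (induction m)
  case (Suc m)
  have "(a + smul t b) ^ Suc m
      = (\<Sum>i\<le>m. smul (t ^ i) (a * mixed_power a b i m)) + (\<Sum>i\<le>m. smul (t ^ Suc i) (b * mixed_power a b i m))"
    by (simp add: Suc.IH distrib_right sum_distrib_left smul_mult_right smul_mult_left[symmetric]
          smul_smul mult.commute sum.distrib)
  also have "(\<Sum>i\<le>m. smul (t ^ i) (a * mixed_power a b i m)) = (\<Sum>i\<le>Suc m. smul (t ^ i) (a * mixed_power a b i m))"
    by (simp add: mixed_power_eq_0 smul_zero_right)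
  also have "(\<Sum>i\<le>m. smul (t ^ Suc i) (b * mixed_power a b i m))
     = (\<Sum>i\<le>Suc m. smul (t ^ i) (if i = 0 then 0 else b * mixed_power a b (i - 1) m))"
    by (subst sum.atMost_Suc_shift) (simp add: smul_zero_right)
  finally show ?case
    by (simp add: sum.distrib[symmetric] smul_add_right del: sum.atMost_Suc)
qed (simp add: smul_one)

lemma root_of_unity_filter:
  assumes \<omega>: "primitive_root \<omega> n" and "n \<ge> 1" and "finite I"
  shows "(\<Sum>j<n. smul (\<omega> ^ (j * r)) (\<Sum>i\<in>I. smul ((\<omega> ^ j) ^ i) (c i)))
       = smul (of_nat n) (\<Sum>i\<in>{i\<in>I. n dvd i + r}. c i)"
proof -
  have "(\<Sum>j<n. smul (\<omega> ^ (j * r)) (\<Sum>i\<in>I. smul ((\<omega> ^ j) ^ i) (c i)))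
      = (\<Sum>j<n. \<Sum>i\<in>I. smul (\<omega> ^ (j * (i + r))) (c i))"
    by (simp add: smul_sum_right smul_smul power_mult[symmetric] power_add[symmetric] algebra_simps)
  also have "\<dots> = (\<Sum>i\<in>I. smul (\<Sum>j<n. \<omega> ^ (j * (i + r))) (c i))"
    by (subst sum.swap) (simp add: smul_sum_left)
  also have "\<dots> = (\<Sum>i\<in>I. if n dvd i + r then smul (of_nat n) (c i) else 0)"
    by (intro sum.cong refl) (simp add: sum_powers_primitive_root[OF \<omega> \<open>n \<ge> 1\<close>] smul_zero_left)
  also have "\<dots> = (\<Sum>i\<in>{i\<in>I. n dvd i + r}. smul (of_nat n) (c i))"
    by (simp add: sum.inter_filter[OF \<open>finite I\<close>])
  also have "\<dots> = smul (of_nat n) (\<Sum>i\<in>{i\<in>I. n dvd i + r}. c i)"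
    by (simp add: smul_sum_right)
  finally show ?thesis .
qed

text \<open>Filtering against \<omega>^(j(n-1)) keeps exactly the degrees 1 and n + 1 in b.\<close>
lemma mixed_power_1_vanishes:
  assumes \<omega>: "primitive_root \<omega> n" and n: "n \<ge> 2" and b: "b ^ Suc n = b"
    and combinations: "\<And>j. j < n \<Longrightarrow> (a + smul (\<omega> ^ j) b) ^ Suc n = a + smul (\<omega> ^ j) b"
  shows "mixed_power a b 1 (Suc n) = 0"
proof -
  define W where "W i = mixed_power a b i (Suc n)" for i
  have "smul (of_nat n) (W 1 + W (Suc n))
      = smul (of_nat n) (\<Sum>i\<in>{i\<in>{..Suc n}. n dvd i + (n - 1)}. W i)"
  proof -
    have "{i\<in>{..Suc n}. n dvd i + (n - 1)} = {1, Suc n}"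
      using dvd_add_pred_cases[OF n] n by auto
    then show ?thesis using n by simp
  qed
  also have "\<dots> = (\<Sum>j<n. smul (\<omega> ^ (j * (n - 1))) (\<Sum>i\<le>Suc n. smul ((\<omega> ^ j) ^ i) (W i)))"
    using n by (intro root_of_unity_filter[OF \<omega>, symmetric]) auto
  also have "\<dots> = (\<Sum>j<n. smul (\<omega> ^ (j * (n - 1))) (\<Sum>i\<le>1. smul ((\<omega> ^ j) ^ i) (if i = 0 then a else b)))"
  proof (rule sum.cong[OF refl])
    fix j assume "j \<in> {..<n}"
    then have "(\<Sum>i\<le>Suc n. smul ((\<omega> ^ j) ^ i) (W i)) = a + smul (\<omega> ^ j) b"
      unfolding W_def power_add_smul_expand[symmetric] by (intro combinations) simp
    also have "\<dots> = (\<Sum>i\<le>1. smul ((\<omega> ^ j) ^ i) (if i = 0 then a else b))"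
      by (simp add: smul_one)
    finally show "smul (\<omega> ^ (j * (n - 1))) (\<Sum>i\<le>Suc n. smul ((\<omega> ^ j) ^ i) (W i))
        = smul (\<omega> ^ (j * (n - 1))) (\<Sum>i\<le>1. smul ((\<omega> ^ j) ^ i) (if i = 0 then a else b))"
      by simp
  qed
  also have "\<dots> = smul (of_nat n) (\<Sum>i\<in>{i\<in>{..1::nat}. n dvd i + (n - 1)}. if i = 0 then a else b)"
    using n by (intro root_of_unity_filter[OF \<omega>]) auto
  also have "\<dots> = smul (of_nat n) b"
  proof -
    have "{i\<in>{..1::nat}. n dvd i + (n - 1)} = {1}"
      using n by (auto simp: le_Suc_eq dest: dvd_imp_le)
    then show ?thesis by simp
  qed
  finally have "smul (of_nat n) (W 1) = 0"
    using b by (simp add: W_def mixed_power_diag smul_add_right)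
  then show ?thesis
    using smul_eq_0_imp of_nat_neq_0_if_primitive_root[OF \<omega> n] by (simp add: W_def)
qed

lemma orthogonal_if_Pk_combinations:
  assumes \<omega>: "primitive_root \<omega> n" and n: "n \<ge> 2" and char: "of_nat (Suc n) \<noteq> (0::'f)"
    and a: "a ^ Suc n = a" and b: "b ^ Suc n = b"
    and combinations: "\<And>j. j < n \<Longrightarrow> (a + smul (\<omega> ^ j) b) ^ Suc n = a + smul (\<omega> ^ j) b"
  shows "a * b = 0 \<and> b * a = 0"
proof -
  note vanishes = mixed_power_1_vanishes[OF \<omega> n b combinations]
  then have commute: "a * b = b * a"
    using mixed_power_1_commutator[of a b "Suc n"] a by simp
  then have "smul (of_nat (Suc n)) (b * a ^ n) = 0"
    using vanishes mixed_power_1_commuting[OF commute, of n] by (simp only: of_nat_mult_eq_smul)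
  then have "b * a ^ n = 0" using smul_eq_0_imp[OF char] by blast
  then have "b * a = 0" using a by (metis mult.assoc mult_zero_left power_Suc2)
  with commute show ?thesis by simp
qed

end

section \<open>The incidence algebra\<close>

definition inc_unit :: "'x::order \<Rightarrow> 'x \<Rightarrow> 'x \<Rightarrow> 'x \<Rightarrow> 'f::field" where
  "inc_unit x y = (\<lambda>i j. if i = x \<and> j = y then 1 else 0)"

definition inc_idempotent :: "('x::order \<Rightarrow> 'x \<Rightarrow> 'f::field) \<Rightarrow> bool" where
  "inc_idempotent e \<longleftrightarrow> e \<in> incidence \<and> inc_mult e e = e"

lemma inc_add_eq_plus: "inc_add f g = f + g"
  by (simp add: inc_add_def fun_eq_iff)

lemma incidence_add: "f \<in> incidence \<Longrightarrow> g \<in> incidence \<Longrightarrow> f + g \<in> incidence"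
  by (auto simp: incidence_def)

lemma incidence_diff: "f \<in> incidence \<Longrightarrow> g \<in> incidence \<Longrightarrow> f - g \<in> incidence"
  by (auto simp: incidence_def)

lemma incidence_smult: "f \<in> incidence \<Longrightarrow> inc_smult c f \<in> incidence"
  by (auto simp: incidence_def inc_smult_def)

lemma incidence_zero: "0 \<in> incidence"
  by (simp add: incidence_def)

lemma incidence_one: "inc_one \<in> incidence"
  by (auto simp: incidence_def inc_one_def)

lemma incidence_unit: "x \<le> y \<Longrightarrow> inc_unit x y \<in> incidence"
  by (auto simp: incidence_def inc_unit_def)

lemma incidence_sum: "(\<And>p. p \<in> P \<Longrightarrow> g p \<in> incidence) \<Longrightarrow> (\<Sum>p\<in>P. g p) \<in> incidence"
  by (induction P rule: infinite_finite_induct) (auto intro: incidence_add incidence_zero)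

lemma incidence_inc_mult: "inc_mult f g \<in> incidence"
  unfolding incidence_def inc_mult_def by (auto intro!: sum.neutral dest: order_trans)

lemma inc_mult_add_left: "inc_mult (f + g) h = inc_mult f h + inc_mult g h"
  by (simp add: inc_mult_def fun_eq_iff sum.distrib distrib_right)

lemma inc_mult_add_right: "inc_mult h (f + g) = inc_mult h f + inc_mult h g"
  by (simp add: inc_mult_def fun_eq_iff sum.distrib distrib_left)

lemma inc_mult_diff_left: "inc_mult (f - g) h = inc_mult f h - inc_mult g h"
  by (simp add: inc_mult_def fun_eq_iff sum_subtractf left_diff_distrib)

lemma inc_mult_diff_right: "inc_mult h (f - g) = inc_mult h f - inc_mult h g"
  by (simp add: inc_mult_def fun_eq_iff sum_subtractf right_diff_distrib)

lemma inc_mult_smult_left: "inc_mult (inc_smult c f) g = inc_smult c (inc_mult f g)"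
  by (simp add: inc_mult_def inc_smult_def fun_eq_iff sum_distrib_left mult.assoc)

lemma inc_mult_smult_right: "inc_mult f (inc_smult c g) = inc_smult c (inc_mult f g)"
  by (simp add: inc_mult_def inc_smult_def fun_eq_iff sum_distrib_left mult_ac)

lemma inc_smult_add: "inc_smult c (f + g) = inc_smult c f + inc_smult c g"
  by (simp add: inc_smult_def fun_eq_iff distrib_left)

lemma inc_smult_smult: "inc_smult c (inc_smult d f) = inc_smult (c * d) f"
  by (simp add: inc_smult_def fun_eq_iff mult.assoc)

lemma inc_smult_zero: "inc_smult c 0 = 0"
  by (simp add: inc_smult_def fun_eq_iff)

lemma inc_mult_one_left:
  fixes f :: "'x::{finite,order} \<Rightarrow> 'x \<Rightarrow> 'f::field"
  assumes "f \<in> incidence"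
  shows "inc_mult inc_one f = f"
proof (intro ext)
  fix x y :: 'x
  have "inc_mult inc_one f x y = (\<Sum>z\<in>{z. x \<le> z \<and> z \<le> y}. if x = z then f x y else 0)"
    unfolding inc_mult_def inc_one_def by (rule sum.cong) auto
  with assms show "inc_mult inc_one f x y = f x y" by (auto simp: incidence_def)
qed

lemma inc_mult_one_right:
  fixes f :: "'x::{finite,order} \<Rightarrow> 'x \<Rightarrow> 'f::field"
  assumes "f \<in> incidence"
  shows "inc_mult f inc_one = f"
proof (intro ext)
  fix x y :: 'x
  have "inc_mult f inc_one x y = (\<Sum>z\<in>{z. x \<le> z \<and> z \<le> y}. if y = z then f x y else 0)"
    unfolding inc_mult_def inc_one_def by (rule sum.cong) auto
  with assms show "inc_mult f inc_one x y = f x y" by (auto simp: incidence_def)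
qed

lemma inc_mult_unit:
  assumes "x \<le> (y::'x::{finite,order})" and "z \<le> w"
  shows "inc_mult (inc_unit x y) (inc_unit z w) = (if y = z then inc_unit x w else (0::_ \<Rightarrow> _ \<Rightarrow> 'f::field))"
proof (intro ext)
  fix i j :: 'x
  have "inc_mult (inc_unit x y) (inc_unit z w) i j
      = (\<Sum>v\<in>{v. i \<le> v \<and> v \<le> j}. if y = v then (if i = x \<and> y = z \<and> j = w then (1::'f) else 0) else 0)"
    unfolding inc_mult_def inc_unit_def by (rule sum.cong) auto
  also have "\<dots> = (if y = z then inc_unit x w else (0::'x \<Rightarrow> 'x \<Rightarrow> 'f)) i j"
    using assms by (auto simp: inc_unit_def)
  finally show "inc_mult (inc_unit x y) (inc_unit z w) i j
      = (if y = z then inc_unit x w else (0::'x \<Rightarrow> 'x \<Rightarrow> 'f)) i j" .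
qed

lemma inc_mult_assoc:
  fixes f g h :: "'x::{finite,order} \<Rightarrow> 'x \<Rightarrow> 'f::field"
  shows "inc_mult (inc_mult f g) h = inc_mult f (inc_mult g h)"
proof (intro ext)
  fix i j :: 'x
  have restrict: "(\<Sum>z\<in>{z. P z}. c z) = (\<Sum>z\<in>UNIV. if P z then c z else 0)" for P and c :: "'x \<Rightarrow> 'f"
    by (simp add: sum.If_cases)
  have "inc_mult (inc_mult f g) h i j
      = (\<Sum>z\<in>UNIV. \<Sum>w\<in>UNIV. if i \<le> w \<and> w \<le> z \<and> z \<le> j then f i w * g w z * h z j else 0)"
    unfolding inc_mult_def restrict
    by (intro sum.cong refl, rename_tac z, case_tac "i \<le> z \<and> z \<le> j")
       (auto simp: sum_distrib_right intro!: sum.cong sum.neutral dest: order_trans)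
  also have "\<dots> = (\<Sum>w\<in>UNIV. \<Sum>z\<in>UNIV. if i \<le> w \<and> w \<le> z \<and> z \<le> j then f i w * g w z * h z j else 0)"
    by (rule sum.swap)
  also have "\<dots> = inc_mult f (inc_mult g h) i j"
    unfolding inc_mult_def restrict
    by (intro sum.cong refl, rename_tac w, case_tac "i \<le> w")
       (auto simp: sum_distrib_left mult.assoc intro!: sum.cong sum.neutral dest: order_trans)
  finally show "inc_mult (inc_mult f g) h i j = inc_mult f (inc_mult g h) i j" .
qed

lemma incidence_expand:
  fixes f :: "'x::{finite,order} \<Rightarrow> 'x \<Rightarrow> 'f::field"
  assumes "f \<in> incidence"
  shows "f = (\<Sum>p\<in>{p. fst p \<le> snd p}. inc_smult (f (fst p) (snd p)) (inc_unit (fst p) (snd p)))"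
proof (intro ext)
  fix i j :: 'x
  have apply_sum: "(\<Sum>p\<in>A. c p) i j = (\<Sum>p\<in>A. c p i j)" for A and c :: "'x \<times> 'x \<Rightarrow> 'x \<Rightarrow> 'x \<Rightarrow> 'f"
    by (induction A rule: infinite_finite_induct) auto
  have "(\<Sum>p\<in>{p. fst p \<le> snd p}. inc_smult (f (fst p) (snd p)) (inc_unit (fst p) (snd p))) i j
      = (\<Sum>p\<in>{p. fst p \<le> snd p}. if (i, j) = p then f i j else 0)"
    unfolding apply_sum inc_smult_def inc_unit_def by (rule sum.cong) auto
  with assms show "f i j = (\<Sum>p\<in>{p. fst p \<le> snd p}. inc_smult (f (fst p) (snd p)) (inc_unit (fst p) (snd p))) i j"
    by (auto simp: incidence_def)
qed

lemma inc_pow_idempotent: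
  fixes e :: "'x::{finite,order} \<Rightarrow> 'x \<Rightarrow> 'f::field"
  assumes "inc_idempotent e"
  shows "inc_pow e (Suc m) = e"
  using assms by (induction m) (simp_all add: inc_idempotent_def inc_mult_one_right)

lemma inc_pow_orthogonal_idempotents:
  fixes e f :: "'x::{finite,order} \<Rightarrow> 'x \<Rightarrow> 'f::field"
  assumes e: "inc_idempotent e" and f: "inc_idempotent f"
    and ef: "inc_mult e f = 0" and fe: "inc_mult f e = 0"
  shows "inc_pow (e + inc_smult t f) (Suc m) = e + inc_smult (t ^ Suc m) f"
proof (induction m)
  case 0
  from e f have "e + inc_smult t f \<in> incidence"
    by (simp add: inc_idempotent_def incidence_add incidence_smult)
  then show ?case by (simp only: inc_pow.simps power_Suc0_right inc_mult_one_right)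
next
  case (Suc m)
  have "inc_pow (e + inc_smult t f) (Suc (Suc m))
      = inc_mult (e + inc_smult t f) (e + inc_smult (t ^ Suc m) f)"
    by (subst inc_pow.simps(2)) (simp only: Suc.IH)
  also have "\<dots> = e + inc_smult (t ^ Suc (Suc m)) f"
    using e f
    by (simp add: inc_idempotent_def inc_mult_add_left inc_mult_add_right inc_mult_smult_left
        inc_mult_smult_right ef fe inc_smult_zero inc_smult_smult mult.commute)
  finally show ?case .
qed

lemmas inc_unit_arith =
  inc_idempotent_def incidence_add incidence_diff incidence_unit less_imp_le
  inc_mult_add_left inc_mult_add_right inc_mult_diff_left inc_mult_diff_right inc_mult_unit

lemma inc_idempotent_diag: "inc_idempotent (inc_unit x x :: 'x::{finite,order} \<Rightarrow> 'x \<Rightarrow> 'f::field)"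
  by (simp add: inc_unit_arith)

lemma inc_idempotent_diag_pair:
  "x \<noteq> z \<Longrightarrow> inc_idempotent (inc_unit x x + inc_unit z z :: 'x::{finite,order} \<Rightarrow> 'x \<Rightarrow> 'f::field)"
  by (simp add: inc_unit_arith)

lemma inc_idempotent_source_plus:
  "x < y \<Longrightarrow> inc_idempotent (inc_unit x x + inc_unit x y :: 'x::{finite,order} \<Rightarrow> 'x \<Rightarrow> 'f::field)"
  by (simp add: inc_unit_arith)

lemma inc_idempotent_source_minus:
  "x < y \<Longrightarrow> inc_idempotent (inc_unit x x - inc_unit x y :: 'x::{finite,order} \<Rightarrow> 'x \<Rightarrow> 'f::field)"
  by (simp add: inc_unit_arith)

lemma inc_idempotent_target_plus:
  "x < y \<Longrightarrow> inc_idempotent (inc_unit y y + inc_unit x y :: 'x::{finite,order} \<Rightarrow> 'x \<Rightarrow> 'f::field)"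
  by (simp add: inc_unit_arith)

lemma inc_idempotent_outside:
  "x < y \<Longrightarrow> z \<noteq> x \<Longrightarrow> z \<noteq> y \<Longrightarrow>
    inc_idempotent (inc_unit z z + inc_unit x x + inc_unit x y :: 'x::{finite,order} \<Rightarrow> 'x \<Rightarrow> 'f::field)"
  by (simp add: inc_unit_arith)

lemma inc_idempotent_common_source:
  "x < y \<Longrightarrow> x < w \<Longrightarrow> y \<noteq> w \<Longrightarrow>
    inc_idempotent (inc_unit x x + inc_unit x y + inc_unit x w :: 'x::{finite,order} \<Rightarrow> 'x \<Rightarrow> 'f::field)"
  by (simp add: inc_unit_arith; use less_imp_neq order.strict_trans in blast)

lemma inc_idempotent_common_target:
  "x < y \<Longrightarrow> z < y \<Longrightarrow> x \<noteq> z \<Longrightarrow>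
    inc_idempotent (inc_unit y y + inc_unit x y + inc_unit z y :: 'x::{finite,order} \<Rightarrow> 'x \<Rightarrow> 'f::field)"
  by (simp add: inc_unit_arith; use less_imp_neq order.strict_trans in blast)

lemma inc_idempotent_disjoint:
  "x < y \<Longrightarrow> z < w \<Longrightarrow> x \<noteq> z \<Longrightarrow> y \<noteq> w \<Longrightarrow> y \<noteq> z \<Longrightarrow> w \<noteq> x \<Longrightarrow>
    inc_idempotent (inc_unit x x + inc_unit x y + inc_unit z z + inc_unit z w
      :: 'x::{finite,order} \<Rightarrow> 'x \<Rightarrow> 'f::field)"
  by (simp add: inc_unit_arith; use less_imp_neq order.strict_trans in blast)

lemma inc_idempotent_composable:
  "x < y \<Longrightarrow> y < w \<Longrightarrow>
    inc_idempotent (inc_unit x x + inc_unit w w + inc_unit x y + inc_unit y w - inc_unit x w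
      :: 'x::{finite,order} \<Rightarrow> 'x \<Rightarrow> 'f::field)"
  by (simp add: inc_unit_arith; use less_imp_neq order.strict_trans in blast)

locale inc_linear_map = F_algebra smul
  for smul :: "'f::field \<Rightarrow> 'b::ring_1 \<Rightarrow> 'b" +
  fixes T :: "('x::{finite,order} \<Rightarrow> 'x \<Rightarrow> 'f) \<Rightarrow> 'b"
  assumes inc_linear: "inc_linear smul T"
begin

lemma linear_add: "f \<in> incidence \<Longrightarrow> g \<in> incidence \<Longrightarrow> T (f + g) = T f + T g"
  using inc_linear by (simp add: inc_linear_def inc_add_eq_plus)

lemma linear_smult: "f \<in> incidence \<Longrightarrow> T (inc_smult c f) = smul c (T f)"
  using inc_linear by (simp add: inc_linear_def)

lemma linear_zero: "T 0 = 0"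
  using linear_smult[of 0 0] by (simp add: inc_smult_zero incidence_def smul_zero_left)

lemma linear_diff:
  assumes "f \<in> incidence" and "g \<in> incidence"
  shows "T (f - g) = T f - T g"
proof -
  have "f - g = f + inc_smult (- 1) g" by (simp add: inc_smult_def fun_eq_iff)
  then have "T (f - g) = T f + smul (- 1) (T g)"
    using assms by (simp only: linear_add linear_smult incidence_smult)
  then show ?thesis by (simp add: smul_minus_left smul_one)
qed

lemma linear_sum: "(\<And>p. p \<in> P \<Longrightarrow> g p \<in> incidence) \<Longrightarrow> T (\<Sum>p\<in>P. g p) = (\<Sum>p\<in>P. T (g p))"
proof (induction P rule: infinite_finite_induct)
  case (insert p P)
  then have "T (g p + (\<Sum>q\<in>P. g q)) = T (g p) + (\<Sum>q\<in>P. T (g q))"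
    by (simp add: linear_add incidence_sum)
  then show ?case by (simp only: sum.insert[OF insert.hyps])
qed (simp_all add: linear_zero)

lemma linear_expand:
  assumes "a \<in> incidence"
  shows "T a = (\<Sum>p\<in>{p. fst p \<le> snd p}. smul (a (fst p) (snd p)) (T (inc_unit (fst p) (snd p))))"
proof -
  have "T a = T (\<Sum>p\<in>{p. fst p \<le> snd p}. inc_smult (a (fst p) (snd p)) (inc_unit (fst p) (snd p)))"
    using incidence_expand[OF assms] by simp
  also have "\<dots> = (\<Sum>p\<in>{p. fst p \<le> snd p}. smul (a (fst p) (snd p)) (T (inc_unit (fst p) (snd p))))"
    by (subst linear_sum) (simp_all add: linear_smult incidence_smult incidence_unit)
  finally show ?thesis .
qed

lemma inc_linear_mult_left: "inc_linear smul (\<lambda>a. c * T a)"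
  using inc_linear by (simp add: inc_linear_def inc_add_eq_plus distrib_left smul_mult_right[symmetric])

lemma inc_linear_mult_right: "inc_linear smul (\<lambda>a. T a * c)"
  using inc_linear by (simp add: inc_linear_def inc_add_eq_plus distrib_right smul_mult_left[symmetric])

lemma inc_linear_jordan_mult: "inc_linear smul (\<lambda>a. T a * c + c * T a)"
  using inc_linear
  by (simp add: inc_linear_def inc_add_eq_plus algebra_simps smul_add_right
      smul_mult_left[symmetric] smul_mult_right[symmetric])

lemma inc_linear_comp_jordan_mult:
  assumes "b \<in> incidence"
  shows "inc_linear smul (\<lambda>a. T (inc_mult a b + inc_mult b a))"
  unfolding inc_linear_def
proof (intro conjI ballI allI)
  fix f g :: "'x \<Rightarrow> 'x \<Rightarrow> 'f" assume "f \<in> incidence" "g \<in> incidence"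
  have "inc_mult (inc_add f g) b + inc_mult b (inc_add f g)
      = (inc_mult f b + inc_mult b f) + (inc_mult g b + inc_mult b g)"
    by (simp add: inc_add_eq_plus inc_mult_add_left inc_mult_add_right algebra_simps)
  then show "T (inc_mult (inc_add f g) b + inc_mult b (inc_add f g))
      = T (inc_mult f b + inc_mult b f) + T (inc_mult g b + inc_mult b g)"
    by (simp add: linear_add incidence_add incidence_inc_mult)
next
  fix c and f :: "'x \<Rightarrow> 'x \<Rightarrow> 'f" assume "f \<in> incidence"
  have "inc_mult (inc_smult c f) b + inc_mult b (inc_smult c f) = inc_smult c (inc_mult f b + inc_mult b f)"
    by (simp add: inc_mult_smult_left inc_mult_smult_right inc_smult_add)
  then show "T (inc_mult (inc_smult c f) b + inc_mult b (inc_smult c f)) = smul c (T (inc_mult f b + inc_mult b f))"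
    by (simp add: linear_smult incidence_add incidence_inc_mult)
qed

end

lemma (in F_algebra) inc_linear_eq_if_eq_on_units:
  fixes S T :: "('x::{finite,order} \<Rightarrow> 'x \<Rightarrow> 'f) \<Rightarrow> 'b"
  assumes "inc_linear smul S" and "inc_linear smul T"
    and "\<And>x y. x \<le> y \<Longrightarrow> S (inc_unit x y) = T (inc_unit x y)" and "a \<in> incidence"
  shows "S a = T a"
proof -
  interpret S: inc_linear_map smul S by unfold_locales (fact assms(1))
  interpret T: inc_linear_map smul T by unfold_locales (fact assms(2))
  show ?thesis
    using assms(3,4) by (simp add: S.linear_expand T.linear_expand)
qed

text \<open>Idempotents span the incidence algebra: e_xy = (e_xx + e_xy) - e_xx.\<close>
lemma (in F_algebra) inc_linear_eq_if_eq_on_idempotents: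
  fixes S T :: "('x::{finite,order} \<Rightarrow> 'x \<Rightarrow> 'f) \<Rightarrow> 'b"
  assumes S: "inc_linear smul S" and T: "inc_linear smul T"
    and idem: "\<And>e. inc_idempotent e \<Longrightarrow> S e = T e" and "a \<in> incidence"
  shows "S a = T a"
proof (rule inc_linear_eq_if_eq_on_units[OF S T _ \<open>a \<in> incidence\<close>])
  interpret S: inc_linear_map smul S by unfold_locales (fact S)
  interpret T: inc_linear_map smul T by unfold_locales (fact T)
  fix x y :: 'x assume "x \<le> y"
  show "S (inc_unit x y) = T (inc_unit x y)"
  proof (cases "x = y")
    case True
    with idem inc_idempotent_diag show ?thesis by blast
  next
    case False
    with \<open>x \<le> y\<close> have "x < y" by simp
    have "inc_unit x y = (inc_unit x x + inc_unit x y) - inc_unit x x" by simp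
    then show ?thesis
      using idem[OF inc_idempotent_diag] idem[OF inc_idempotent_source_plus[OF \<open>x < y\<close>]] \<open>x \<le> y\<close>
      by (metis S.linear_diff T.linear_diff incidence_add incidence_unit order_refl)
  qed
qed


section \<open>Idempotent-preserving maps are Jordan homomorphisms\<close>

locale idempotent_preserving = inc_linear_map smul T
  for smul :: "'f::field \<Rightarrow> 'b::ring_1 \<Rightarrow> 'b"
    and T :: "('x::{finite,order} \<Rightarrow> 'x \<Rightarrow> 'f) \<Rightarrow> 'b" +
  assumes two_neq_0: "(2::'f) \<noteq> 0"
    and idempotent: "inc_idempotent e \<Longrightarrow> T e * T e = T e"
begin

definition sq_defect :: "('x \<Rightarrow> 'x \<Rightarrow> 'f) \<Rightarrow> 'b" where
  "sq_defect a = T (inc_mult a a) - T a * T a"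

definition jordan_defect :: "('x \<Rightarrow> 'x \<Rightarrow> 'f) \<Rightarrow> ('x \<Rightarrow> 'x \<Rightarrow> 'f) \<Rightarrow> 'b" where
  "jordan_defect a b = T (inc_mult a b + inc_mult b a) - (T a * T b + T b * T a)"

lemma sq_defect_idempotent: "inc_idempotent e \<Longrightarrow> sq_defect e = 0"
  using idempotent by (simp add: sq_defect_def inc_idempotent_def)

lemma sq_defect_add:
  assumes "a \<in> incidence" and "b \<in> incidence"
  shows "sq_defect (a + b) = sq_defect a + sq_defect b + jordan_defect a b"
  using assms
  by (simp add: sq_defect_def jordan_defect_def inc_mult_add_left inc_mult_add_right linear_add
      incidence_add incidence_inc_mult algebra_simps)

lemma sq_defect_diff:
  assumes "a \<in> incidence" and "b \<in> incidence"
  shows "sq_defect (a - b) = sq_defect a + sq_defect b - jordan_defect a b"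
  using assms
  by (simp add: sq_defect_def jordan_defect_def inc_mult_diff_left inc_mult_diff_right linear_diff
      linear_add incidence_diff incidence_add incidence_inc_mult algebra_simps)

lemma jordan_defect_commute: "jordan_defect a b = jordan_defect b a"
  by (simp add: jordan_defect_def add.commute)

lemma jordan_defect_add_left:
  assumes "a \<in> incidence" and "b \<in> incidence" and "c \<in> incidence"
  shows "jordan_defect (a + b) c = jordan_defect a c + jordan_defect b c"
  using assms
  by (simp add: jordan_defect_def inc_mult_add_left inc_mult_add_right linear_add
      incidence_add incidence_inc_mult algebra_simps)

lemma jordan_defect_self: "jordan_defect a a = sq_defect a + sq_defect a"
  unfolding jordan_defect_def sq_defect_def linear_add[OF incidence_inc_mult incidence_inc_mult]
  by (simp add: algebra_simps)

lemmas defect_expand = sq_defect_add sq_defect_diff jordan_defect_add_left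
  incidence_add incidence_unit less_imp_le

lemma jordan_defect_diag_diag: "jordan_defect (inc_unit x x) (inc_unit z z) = 0"
proof (cases "x = z")
  case True
  then show ?thesis by (simp add: jordan_defect_self sq_defect_idempotent inc_idempotent_diag)
next
  case False
  from sq_defect_idempotent[OF inc_idempotent_diag_pair[OF False]] show ?thesis
    by (simp add: defect_expand sq_defect_idempotent inc_idempotent_diag)
qed

lemma sq_defect_unit_and_source:
  assumes "x < y"
  shows "sq_defect (inc_unit x y) = 0" and "jordan_defect (inc_unit x x) (inc_unit x y) = 0"
proof -
  have plus: "sq_defect (inc_unit x y) + jordan_defect (inc_unit x x) (inc_unit x y) = 0"
    using sq_defect_idempotent[OF inc_idempotent_source_plus[OF assms]] assms
    by (simp add: defect_expand sq_defect_idempotent inc_idempotent_diag)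
  have minus: "sq_defect (inc_unit x y) - jordan_defect (inc_unit x x) (inc_unit x y) = 0"
    using sq_defect_idempotent[OF inc_idempotent_source_minus[OF assms]] assms
    by (simp add: defect_expand sq_defect_idempotent inc_idempotent_diag)
  from plus minus have "sq_defect (inc_unit x y) + sq_defect (inc_unit x y) = 0 + 0"
    by (simp add: algebra_simps)
  then show sq: "sq_defect (inc_unit x y) = 0" by (rule double_cancel[OF two_neq_0])
  with plus show "jordan_defect (inc_unit x x) (inc_unit x y) = 0" by simp
qed

lemma sq_defect_unit: "x \<le> y \<Longrightarrow> sq_defect (inc_unit x y) = 0"
  using sq_defect_unit_and_source(1) sq_defect_idempotent[OF inc_idempotent_diag]
  by (cases "x = y") auto

lemma jordan_defect_diag_unit:
  assumes "x \<le> y"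
  shows "jordan_defect (inc_unit z z) (inc_unit x y) = 0"
proof (cases "x = y")
  case True
  then show ?thesis by (simp add: jordan_defect_diag_diag)
next
  case False
  with assms have "x < y" by simp
  note source = sq_defect_unit_and_source[OF \<open>x < y\<close>]
  consider "z = x" | "z = y" | "z \<noteq> x" "z \<noteq> y" by blast
  then show ?thesis
  proof cases
    case 1
    with source show ?thesis by simp
  next
    case 2
    from sq_defect_idempotent[OF inc_idempotent_target_plus[OF \<open>x < y\<close>]] \<open>x < y\<close> 2
    show ?thesis by (simp add: defect_expand source sq_defect_idempotent inc_idempotent_diag)
  next
    case 3
    from sq_defect_idempotent[OF inc_idempotent_outside[OF \<open>x < y\<close> 3]] \<open>x < y\<close>
    show ?thesis
      by (simp add: defect_expand source sq_defect_idempotent inc_idempotent_diag jordan_defect_diag_diag)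
  qed
qed

lemma jordan_defect_unit_diag: "x \<le> y \<Longrightarrow> jordan_defect (inc_unit x y) (inc_unit z z) = 0"
  by (simp add: jordan_defect_commute[of "inc_unit x y"] jordan_defect_diag_unit)

lemmas unit_defects = sq_defect_unit jordan_defect_diag_diag jordan_defect_diag_unit
  jordan_defect_unit_diag

lemma jordan_defect_common_source:
  assumes "x < y" and "x < w" and "y \<noteq> w"
  shows "jordan_defect (inc_unit x y) (inc_unit x w) = 0"
  using sq_defect_idempotent[OF inc_idempotent_common_source[OF assms]] assms
  by (simp add: defect_expand unit_defects)

lemma jordan_defect_common_target:
  assumes "x < y" and "z < y" and "x \<noteq> z"
  shows "jordan_defect (inc_unit x y) (inc_unit z y) = 0"
  using sq_defect_idempotent[OF inc_idempotent_common_target[OF assms]] assms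
  by (simp add: defect_expand unit_defects)

lemma jordan_defect_disjoint:
  assumes "x < y" and "z < w" and "x \<noteq> z" and "y \<noteq> w" and "y \<noteq> z" and "w \<noteq> x"
  shows "jordan_defect (inc_unit x y) (inc_unit z w) = 0"
  using sq_defect_idempotent[OF inc_idempotent_disjoint[OF assms]] assms
  by (simp add: defect_expand unit_defects)

lemma jordan_defect_composable:
  assumes "x < y" and "y < w"
  shows "jordan_defect (inc_unit x y) (inc_unit y w) = 0"
proof -
  have "x < w" using assms by simp
  then show ?thesis
    using sq_defect_idempotent[OF inc_idempotent_composable[OF assms]] assms
      jordan_defect_common_source[of x y w] jordan_defect_common_target[of y w x]
    by (simp add: defect_expand unit_defects)
qed

lemma jordan_defect_units:
  assumes "x \<le> y" and "z \<le> w"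
  shows "jordan_defect (inc_unit x y) (inc_unit z w) = 0"
proof (cases "x = y \<or> z = w")
  case True
  with assms show ?thesis using unit_defects by auto
next
  case False
  with assms have xy: "x < y" and zw: "z < w" by auto
  consider "x = z" "y = w" | "x = z" "y \<noteq> w" | "x \<noteq> z" "y = w" | "y = z" | "w = x"
    | "x \<noteq> z" "y \<noteq> w" "y \<noteq> z" "w \<noteq> x"
    by blast
  then show ?thesis
  proof cases
    case 1
    then show ?thesis by (simp add: jordan_defect_self sq_defect_unit assms)
  next
    case 2
    with xy zw show ?thesis by (simp add: jordan_defect_common_source)
  next
    case 3
    with xy zw show ?thesis by (simp add: jordan_defect_common_target)
  next
    case 4
    with xy zw show ?thesis by (simp add: jordan_defect_composable)
  next
    case 5
    with xy zw show ?thesis by (simp add: jordan_defect_commute[of "inc_unit x y"] jordan_defect_composable)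
  next
    case 6
    with xy zw show ?thesis by (simp add: jordan_defect_disjoint)
  qed
qed

lemma jordan_defect_eq_0_if_units:
  assumes "b \<in> incidence" and "\<And>x y. x \<le> y \<Longrightarrow> jordan_defect (inc_unit x y) b = 0"
    and "a \<in> incidence"
  shows "jordan_defect a b = 0"
proof -
  have "T (inc_mult a b + inc_mult b a) = T a * T b + T b * T a"
  proof (rule inc_linear_eq_if_eq_on_units[OF inc_linear_comp_jordan_mult[OF assms(1)]
        inc_linear_jordan_mult _ assms(3)])
    fix x y :: 'x assume "x \<le> y"
    with assms(2) show "T (inc_mult (inc_unit x y) b + inc_mult b (inc_unit x y))
        = T (inc_unit x y) * T b + T b * T (inc_unit x y)"
      by (simp add: jordan_defect_def)
  qed
  then show ?thesis by (simp add: jordan_defect_def)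
qed

lemma jordan_defect_eq_0:
  assumes "a \<in> incidence" and "b \<in> incidence"
  shows "jordan_defect a b = 0"
proof -
  have "jordan_defect b a = 0"
  proof (rule jordan_defect_eq_0_if_units[OF assms(1) _ assms(2)])
    fix z w :: 'x assume "z \<le> w"
    show "jordan_defect (inc_unit z w) a = 0"
      by (subst jordan_defect_commute)
         (rule jordan_defect_eq_0_if_units[OF incidence_unit[OF \<open>z \<le> w\<close>]
            jordan_defect_units[OF _ \<open>z \<le> w\<close>] assms(1)])
  qed
  then show ?thesis by (simp add: jordan_defect_commute)
qed

lemma jordan_product:
  assumes "a \<in> incidence" and "b \<in> incidence"
  shows "T (inc_mult a b + inc_mult b a) = T a * T b + T b * T a"
  using jordan_defect_eq_0[OF assms] by (simp add: jordan_defect_def)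

lemma square:
  assumes "a \<in> incidence"
  shows "T (inc_mult a a) = T a * T a"
proof -
  have "sq_defect a + sq_defect a = 0 + 0"
    using jordan_defect_eq_0[OF assms assms] by (simp add: jordan_defect_self)
  then have "sq_defect a = 0" by (rule double_cancel[OF two_neq_0])
  then show ?thesis by (simp add: sq_defect_def)
qed

text \<open>The triple product is recovered from the Jordan identity
  a \<circ> (a \<circ> b) = a^2 \<circ> b + 2 aba, where x \<circ> y = xy + yx.\<close>
lemma triple_product:
  assumes a: "a \<in> incidence" and b: "b \<in> incidence"
  shows "T (inc_mult (inc_mult a b) a) = T a * T b * T a"
proof -
  let ?aba = "inc_mult (inc_mult a b) a" and ?ab = "inc_mult a b + inc_mult b a"
  have ab: "?ab \<in> incidence" by (simp add: incidence_add incidence_inc_mult)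
  have "inc_mult a ?ab + inc_mult ?ab a
      = (inc_mult (inc_mult a a) b + inc_mult b (inc_mult a a)) + (?aba + ?aba)"
    by (simp add: inc_mult_add_left inc_mult_add_right inc_mult_assoc add_ac)
  then have "T (inc_mult a ?ab + inc_mult ?ab a)
      = T (inc_mult (inc_mult a a) b + inc_mult b (inc_mult a a)) + (T ?aba + T ?aba)"
    by (simp only: linear_add incidence_add incidence_inc_mult)
  then have "T a * (T a * T b + T b * T a) + (T a * T b + T b * T a) * T a
      = (T a * T a * T b + T b * (T a * T a)) + (T ?aba + T ?aba)"
    by (simp only: jordan_product[OF a ab] jordan_product[OF a b] jordan_product[OF incidence_inc_mult b]
        square[OF a])
  then have "T ?aba + T ?aba = T a * T b * T a + T a * T b * T a"
    by (simp add: algebra_simps)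
  then show ?thesis by (rule double_cancel[OF two_neq_0])
qed

lemma inc_jordan_hom: "inc_jordan_hom smul T"
  unfolding inc_jordan_hom_def using inc_linear square triple_product by blast

end

section \<open>Maps preserving P_k\<close>

locale Pk_preserving = inc_linear_map smul T
  for smul :: "'f::field \<Rightarrow> 'b::ring_1 \<Rightarrow> 'b"
    and T :: "('x::{finite,order} \<Rightarrow> 'x \<Rightarrow> 'f) \<Rightarrow> 'b" +
  fixes n :: nat and \<omega> :: 'f
  assumes n_ge_2: "n \<ge> 2" and primitive: "primitive_root \<omega> n"
    and char: "of_nat (Suc n) \<noteq> (0::'f)"
    and Pk: "T ` inc_Pk (Suc n) \<subseteq> Pk (Suc n)"
begin

lemma two_neq_0: "(2::'f) \<noteq> 0"
  using two_neq_0_if_of_nat_Suc[OF of_nat_neq_0_if_primitive_root[OF primitive n_ge_2] char] .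

lemma power_Suc_n: "a \<in> incidence \<Longrightarrow> inc_pow a (Suc n) = a \<Longrightarrow> T a ^ Suc n = T a"
  using Pk by (auto simp: inc_Pk_def Pk_def)

lemma idempotent_power:
  assumes "inc_idempotent e"
  shows "T e ^ Suc n = T e"
  using assms inc_pow_idempotent[OF assms] by (intro power_Suc_n) (simp_all add: inc_idempotent_def)

lemma orthogonal:
  assumes e: "inc_idempotent e" and f: "inc_idempotent f"
    and ef: "inc_mult e f = 0" and fe: "inc_mult f e = 0"
  shows "T e * T f = 0 \<and> T f * T e = 0"
proof (rule orthogonal_if_Pk_combinations[OF primitive n_ge_2 char
      idempotent_power[OF e] idempotent_power[OF f]])
  fix j assume "j < n"
  have "(\<omega> ^ j) ^ Suc n = \<omega> ^ j * (\<omega> ^ n) ^ j"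
    by (simp add: power_mult[symmetric] mult.commute)
  then have "(\<omega> ^ j) ^ Suc n = \<omega> ^ j"
    using primitive by (simp add: primitive_root_def)
  then have "inc_pow (e + inc_smult (\<omega> ^ j) f) (Suc n) = e + inc_smult (\<omega> ^ j) f"
    by (simp only: inc_pow_orthogonal_idempotents[OF e f ef fe])
  with e f have "T (e + inc_smult (\<omega> ^ j) f) ^ Suc n = T (e + inc_smult (\<omega> ^ j) f)"
    by (intro power_Suc_n) (simp_all add: inc_idempotent_def incidence_add incidence_smult)
  with e f show "(T e + smul (\<omega> ^ j) (T f)) ^ Suc n = T e + smul (\<omega> ^ j) (T f)"
    by (simp add: inc_idempotent_def linear_add linear_smult incidence_smult)
qed

lemma one_mult_idempotent:
  assumes e: "inc_idempotent e"
  shows "T inc_one * T e = T e * T e" and "T e * T inc_one = T e * T e"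
proof -
  define f where "f = inc_one - e"
  from e have e_inc: "e \<in> incidence" and ee: "inc_mult e e = e" by (simp_all add: inc_idempotent_def)
  have ef: "inc_mult e f = 0" and fe: "inc_mult f e = 0"
    unfolding f_def by (simp_all add: inc_mult_diff_left inc_mult_diff_right inc_mult_one_left
        inc_mult_one_right e_inc ee)
  have f: "inc_idempotent f"
    unfolding inc_idempotent_def f_def
    by (simp add: inc_mult_diff_left inc_mult_diff_right inc_mult_one_left inc_mult_one_right
        e_inc ee incidence_diff incidence_one)
  have "T inc_one = T (e + f)" by (simp add: f_def)
  also have "\<dots> = T e + T f"
    using e_inc f by (simp add: linear_add inc_idempotent_def)
  finally have "T inc_one = T e + T f" .
  with orthogonal[OF e f ef fe]
  show "T inc_one * T e = T e * T e" and "T e * T inc_one = T e * T e"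
    by (simp_all add: distrib_left distrib_right)
qed

lemma one_commute: "a \<in> incidence \<Longrightarrow> T inc_one * T a = T a * T inc_one"
  by (rule inc_linear_eq_if_eq_on_idempotents[OF inc_linear_mult_left inc_linear_mult_right])
     (simp_all add: one_mult_idempotent)

lemma one_power_mult_idempotent:
  assumes "inc_idempotent e"
  shows "T inc_one ^ m * T e = T e ^ Suc m"
proof (induction m)
  case (Suc m)
  have "T inc_one ^ Suc m * T e = T inc_one ^ m * (T inc_one * T e)"
    by (simp only: power_Suc2 mult.assoc)
  also have "\<dots> = T e ^ Suc (Suc m)"
    using one_mult_idempotent(1)[OF assms] Suc.IH by (simp only: mult.assoc[symmetric] power_Suc2)
  finally show ?case .
qed simp

lemma one_power_n_mult: "a \<in> incidence \<Longrightarrow> T inc_one ^ n * T a = T a"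
  by (rule inc_linear_eq_if_eq_on_idempotents[OF inc_linear_mult_left inc_linear])
     (simp_all only: one_power_mult_idempotent idempotent_power)

lemma one_power_n: "1 \<in> T ` incidence \<Longrightarrow> T inc_one ^ n = 1"
  using one_power_n_mult by force

lemma jordan_factor: "inc_jordan_hom smul (\<lambda>a. T inc_one ^ (n - 1) * T a)"
proof -
  have Suc_pred: "Suc (n - 1) = n" using n_ge_2 by simp
  interpret \<psi>: idempotent_preserving smul "\<lambda>a. T inc_one ^ (n - 1) * T a"
  proof (unfold_locales)
    show "inc_linear smul (\<lambda>a. T inc_one ^ (n - 1) * T a)" by (rule inc_linear_mult_left)
    show "(2::'f) \<noteq> 0" by (rule two_neq_0)
  next
    fix e :: "'x \<Rightarrow> 'x \<Rightarrow> 'f" assume e: "inc_idempotent e"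
    have "n + n = Suc n + (n - 1)" using n_ge_2 by simp
    then have "T e ^ n * T e ^ n = T e ^ Suc n * T e ^ (n - 1)"
      by (simp only: power_add[symmetric])
    also have "\<dots> = T e ^ n"
      by (simp only: idempotent_power[OF e] power_Suc[symmetric] Suc_pred)
    finally show "T inc_one ^ (n - 1) * T e * (T inc_one ^ (n - 1) * T e) = T inc_one ^ (n - 1) * T e"
      by (simp only: one_power_mult_idempotent[OF e] Suc_pred)
  qed
  show ?thesis by (rule \<psi>.inc_jordan_hom)
qed

lemma factorisation: "a \<in> incidence \<Longrightarrow> T a = T inc_one * (T inc_one ^ (n - 1) * T a)"
  using one_power_n_mult n_ge_2 by (simp add: mult.assoc[symmetric] power_Suc[symmetric])

end

theorem corollary7p4:
  fixes k :: nat
    and smul :: "'f::field \<Rightarrow> 'b::ring_1 \<Rightarrow> 'b"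
    and \<phi> :: "('x::{finite,order} \<Rightarrow> 'x \<Rightarrow> 'f) \<Rightarrow> 'b"
  assumes k: "k \<ge> 3"
    and root: "\<exists>\<omega>::'f. \<omega> ^ (k - 1) = 1 \<and> (\<forall>j. 0 < j \<and> j < k - 1 \<longrightarrow> \<omega> ^ j \<noteq> 1)"
    and char: "of_nat k \<noteq> (0::'f)"
    and alg: "is_F_algebra smul"
    and lin: "inc_linear smul \<phi>"
    and Pk_pres: "\<phi> ` inc_Pk k \<subseteq> Pk k"
    and one: "1 \<in> \<phi> ` incidence"
  shows "\<exists>\<psi> u. inc_jordan_hom smul \<psi> \<and>
            (\<forall>a\<in>incidence. u * \<phi> a = \<phi> a * u) \<and>
            u ^ (k - 1) = 1 \<and>
            (\<forall>a\<in>incidence. \<phi> a = u * \<psi> a)"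
proof -
  obtain \<omega> :: 'f where \<omega>: "primitive_root \<omega> (k - 1)"
    using root by (auto simp: primitive_root_def)
  have "Suc (k - 1) = k" using k by simp
  then interpret \<phi>: Pk_preserving smul \<phi> "k - 1" \<omega>
    using k \<omega> char alg lin Pk_pres by unfold_locales simp_all
  show ?thesis
    using \<phi>.jordan_factor \<phi>.one_commute \<phi>.one_power_n[OF one] \<phi>.factorisation by blast
qed

end
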